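(* Let $q\in\mathbb{C}\setminus\{0\}$, let $P,f\in\mathbb{C}[x^{-1}][[x]]$ with $P\ne0$ satisfy $x\sigma_qf+f=P$, and let $n,k$ be integers with $1\le k\le n$. For $0\le j\le k$ set $$A_{k;j}=\prod_{\substack{0\le \ell\le k\\ \ell\ne j}}(P_j-P_\ell)\in\mathbb{C}[x^{-1}][[x]].$$ Then $$L_{n,k}^P(f^n)=(-1)^{k(2n-k+1)/2}\sum_{j=0}^{k}\frac{1}{A_{k;j}}\,(f-P_j)^n .$$
   Context: $\mathbb{C}[x^{-1}][[x]]$ is the field of formal Laurent series; $\sigma_qf(x)=f(qx)$; field elements act as multiplication operators and products of operators are compositions. $P_0=0$, $P_1=P$, $P_m=\sum_{k=0}^{m-1}(-x\sigma_q)^kP$ for $m\ge2$; the $P_m$ are pairwise distinct, so $A_{k;j}\neq0$. The operators $L_{n,k}^P$ are defined by $L_{n,1}^P=\frac{1}{P_1}\left(x^n\sigma_q-(-1)^n\right)$ and $L_{n,k+1}^P=\frac{1}{P_{k+1}}\left(x^{n-k}\sigma_q-(-1)^{n-k}\right)L_{n,k}^P$ for $1\le k<n$. *)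

theory Defs
  imports "HOL-Computational_Algebra.Formal_Laurent_Series"
begin

text \<open>The q-dilation operator sigma_q f(x) = f(qx) on formal Laurent series:
  coefficient n is multiplied by q to the power n (n an integer).\<close>
lift_definition sigma_q :: "complex \<Rightarrow> complex fls \<Rightarrow> complex fls"
  is "\<lambda>q f n. q powi n * f n"
  by (auto elim!: eventually_mono)

definition Pm :: "complex \<Rightarrow> complex fls \<Rightarrow> nat \<Rightarrow> complex fls" where
  "Pm q P m = (\<Sum>k<m. ((\<lambda>g. - (fls_X * sigma_q q g)) ^^ k) P)"

fun Lop :: "complex \<Rightarrow> complex fls \<Rightarrow> nat \<Rightarrow> nat \<Rightarrow> complex fls \<Rightarrow> complex fls" where
  "Lop q P n 0 g = g"
| "Lop q P n (Suc k) g =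
     inverse (Pm q P (Suc k)) *
       (fls_X ^ (n - k) * sigma_q q (Lop q P n k g) - (-1) ^ (n - k) * Lop q P n k g)"

definition Akj :: "complex \<Rightarrow> complex fls \<Rightarrow> nat \<Rightarrow> nat \<Rightarrow> complex fls" where
  "Akj q P k j = (\<Prod>l\<in>{0..k} - {j}. (Pm q P j - Pm q P l))"

end

(* Write g_j = f - P_j.  Since P_(j+1) = P - x sigma_q P_j, the functional equation for f reads
   x sigma_q g_j = - g_(j+1), and likewise x sigma_q (P_j - P_l) = - (P_(j+1) - P_(l+1)).
   As sigma_q is a field automorphism, x^(n-k) sigma_q maps the sum of g_j^n / A_(k;j) over the
   nodes P_0, ..., P_k to (-1)^(n-k) times the same sum over the shifted nodes P_1, ..., P_(k+1).
   The recursion of divided differences for the pairwise distinct nodes P_0 = 0, ..., P_(k+1)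
   turns 1/P_(k+1) times the difference of these two sums into the sum for k+1, which is the
   induction step; the signs (-1)^(n-k) accumulate to the exponent n + (n-1) + ... + (n-k+1). *)

theory Submission
  imports Defs
begin

unbundle fps_syntax

lemma fls_nth_sigma_q [simp]: "sigma_q q f $$ n = q powi n * f $$ n"
  by transfer simp

lemma sigma_q_0 [simp]: "sigma_q q 0 = 0"
  and sigma_q_1 [simp]: "sigma_q q 1 = 1"
  and sigma_q_add [simp]: "sigma_q q (f + g) = sigma_q q f + sigma_q q g"
  and sigma_q_diff [simp]: "sigma_q q (f - g) = sigma_q q f - sigma_q q g"
  and sigma_q_minus [simp]: "sigma_q q (- f) = - sigma_q q f"
  by (simp_all add: fls_eq_iff algebra_simps)

lemma sigma_q_sum: "sigma_q q (\<Sum>i\<in>S. g i) = (\<Sum>i\<in>S. sigma_q q (g i))"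
  by (induction S rule: infinite_finite_induct) simp_all

lemma sigma_q_eq_0_iff [simp]: "q \<noteq> 0 \<Longrightarrow> sigma_q q f = 0 \<longleftrightarrow> f = 0"
  by (auto simp: fls_eq_iff)

lemma fls_subdegree_sigma_q [simp]:
  assumes "q \<noteq> 0" shows "fls_subdegree (sigma_q q f) = fls_subdegree f"
  by (cases "f = 0") (use assms in \<open>auto intro: fls_subdegree_eqI\<close>)

lemma sigma_q_mult:
  assumes "q \<noteq> 0" shows "sigma_q q (f * g) = sigma_q q f * sigma_q q g"
proof (rule fls_eqI)
  fix n
  show "sigma_q q (f * g) $$ n = (sigma_q q f * sigma_q q g) $$ n"
    using assms
    by (simp add: fls_times_nth(2)[of f g] fls_times_nth(2)[of "sigma_q q f"] sum_distrib_left
        power_int_diff field_simps)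
qed

lemma sigma_q_power: "q \<noteq> 0 \<Longrightarrow> sigma_q q (f ^ n) = sigma_q q f ^ n"
  by (induction n) (simp_all add: sigma_q_mult)

lemma sigma_q_inverse:
  assumes "q \<noteq> 0" shows "sigma_q q (inverse f) = inverse (sigma_q q f)"
proof (cases "f = 0")
  case False
  then have "sigma_q q f * sigma_q q (inverse f) = 1"
    using assms by (simp flip: sigma_q_mult)
  then show ?thesis by (metis inverse_unique)
qed simp

lemma fls_X_power_sigma_q_prod:
  assumes "q \<noteq> 0" "finite S"
  shows "fls_X ^ card S * sigma_q q (\<Prod>i\<in>S. g i) = (\<Prod>i\<in>S. fls_X * sigma_q q (g i))"
  using assms(2) by (induction S rule: finite_induct) (simp_all add: sigma_q_mult[OF assms(1)] mult_ac)

lemma fls_X_power_sigma_q_power: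
  "q \<noteq> 0 \<Longrightarrow> fls_X ^ n * sigma_q q (g ^ n) = (fls_X * sigma_q q g) ^ n"
  by (simp add: sigma_q_power power_mult_distrib)

lemma Pm_0 [simp]: "Pm q P 0 = 0"
  by (simp add: Pm_def)

lemma Pm_Suc: "Pm q P (Suc j) = P - fls_X * sigma_q q (Pm q P j)"
proof -
  let ?T = "\<lambda>g. - (fls_X * sigma_q q g)"
  have "Pm q P (Suc j) = P + (\<Sum>i<j. ?T ((?T ^^ i) P))"
    unfolding Pm_def sum.lessThan_Suc_shift by simp
  also have "(\<Sum>i<j. ?T ((?T ^^ i) P)) = ?T (Pm q P j)"
    by (simp add: Pm_def sigma_q_sum sum_distrib_left sum_negf)
  finally show ?thesis by simp
qed

lemma Pm_Suc_nth_le_subdegree: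
  "k \<le> fls_subdegree P \<Longrightarrow> Pm q P (Suc m) $$ k = P $$ k"
proof (induction m arbitrary: k)
  case (Suc m)
  then have "Pm q P (Suc m) $$ (k - 1) = 0" by simp
  then show ?case by (simp add: Pm_Suc[of q P "Suc m"] fls_X_times_conv_shift(1))
qed (simp add: Pm_Suc)

lemma Pm_Suc_neq_0: "P \<noteq> 0 \<Longrightarrow> Pm q P (Suc m) \<noteq> 0"
  using Pm_Suc_nth_le_subdegree[of "fls_subdegree P" P q m] by auto

lemma fls_X_sigma_q_Pm_diff:
  "fls_X * sigma_q q (Pm q P j - Pm q P l) = - (Pm q P (Suc j) - Pm q P (Suc l))"
  by (simp add: Pm_Suc algebra_simps)

lemma inj_Pm:
  assumes "q \<noteq> 0" "P \<noteq> 0" shows "inj (Pm q P)"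
proof -
  have "Pm q P j = Pm q P l \<Longrightarrow> j = l" for j l
  proof (induction j arbitrary: l)
    case 0
    then show ?case using Pm_Suc_neq_0[OF assms(2)] by (metis Pm_0 not0_implies_Suc)
  next
    case (Suc j)
    then obtain l' where l: "l = Suc l'"
      using Pm_Suc_neq_0[OF assms(2)] by (metis Pm_0 not0_implies_Suc)
    with Suc.prems have "fls_X * sigma_q q (Pm q P j - Pm q P l') = 0"
      by (simp only: fls_X_sigma_q_Pm_diff) simp
    with assms(1) have "Pm q P j = Pm q P l'"
      by (metis sigma_q_eq_0_iff fls_X_nonzero mult_eq_0_iff right_minus_eq)
    then show ?case using Suc.IH l by simp
  qed
  then show ?thesis by (rule injI)
qed

definition barycentric_weight :: "('b \<Rightarrow> 'a::field) \<Rightarrow> 'b set \<Rightarrow> 'b \<Rightarrow> 'a" where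
  "barycentric_weight p S j = inverse (\<Prod>l\<in>S - {j}. p j - p l)"

lemma barycentric_weight_remove:
  assumes "finite S" "inj_on p S" "a \<in> S" "j \<in> S" "j \<noteq> a"
  shows "barycentric_weight p (S - {a}) j = (p j - p a) * barycentric_weight p S j"
proof -
  have "S - {j} = insert a (S - {a} - {j})"
    using assms(3,5) by auto
  then have "(\<Prod>l\<in>S - {j}. p j - p l) = (p j - p a) * (\<Prod>l\<in>S - {a} - {j}. p j - p l)"
    using assms(1) by simp
  moreover have "p j - p a \<noteq> 0"
    using assms(2-5) by (auto simp: inj_on_def)
  ultimately show ?thesis
    by (simp add: barycentric_weight_def)
qed

lemma barycentric_weight_image:
  assumes "inj_on h T" "j \<in> T"
  shows "barycentric_weight p (h ` T) (h j) = barycentric_weight (p \<circ> h) T j"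
proof -
  have "h ` T - {h j} = h ` (T - {j})"
    using assms by (simp add: inj_on_image_set_diff)
  moreover have "inj_on h (T - {j})"
    using assms(1) by (rule inj_on_subset) auto
  ultimately show ?thesis
    by (simp add: barycentric_weight_def prod.reindex)
qed

lemma sum_barycentric_weight_remove:
  assumes "finite S" "inj_on p S" "a \<in> S"
  shows "(\<Sum>j\<in>S - {a}. barycentric_weight p (S - {a}) j * F j)
    = (\<Sum>j\<in>S. (p j - p a) * barycentric_weight p S j * F j)"
proof -
  have "(\<Sum>j\<in>S - {a}. barycentric_weight p (S - {a}) j * F j)
      = (\<Sum>j\<in>S - {a}. (p j - p a) * barycentric_weight p S j * F j)"
    using assms by (intro sum.cong) (auto simp: barycentric_weight_remove)
  then show ?thesis
    using assms by (simp add: sum.remove[of S a])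
qed

lemma sum_barycentric_weight_diff:
  assumes "finite S" "inj_on p S" "a \<in> S" "b \<in> S"
  shows "(\<Sum>j\<in>S - {a}. barycentric_weight p (S - {a}) j * F j)
      - (\<Sum>j\<in>S - {b}. barycentric_weight p (S - {b}) j * F j)
    = (p b - p a) * (\<Sum>j\<in>S. barycentric_weight p S j * F j)"
proof -
  have "(\<Sum>j\<in>S. (p j - p a) * barycentric_weight p S j * F j)
      - (\<Sum>j\<in>S. (p j - p b) * barycentric_weight p S j * F j)
    = (\<Sum>j\<in>S. (p b - p a) * (barycentric_weight p S j * F j))"
    by (simp flip: sum_subtractf add: algebra_simps)
  then show ?thesis
    using assms by (simp add: sum_barycentric_weight_remove sum_distrib_left)
qed

lemma minus_one_power_mult_diff:
  assumes "k \<le> n" shows "(-1 :: 'a::ring_1) ^ n * (-1) ^ k = (-1) ^ (n - k)"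
  using assms by (auto simp: minus_one_power_iff)

lemma triangle_exponent_Suc:
  fixes n k :: nat assumes "k < n"
  shows "Suc k * (2 * n - Suc k + 1) div 2 = k * (2 * n - k + 1) div 2 + (n - k)"
proof -
  obtain m where n: "n = Suc (k + m)"
    using less_imp_Suc_add[OF assms] by blast
  have split: "Suc k * (2 * n - Suc k + 1) = k * (2 * n - k + 1) + (n - k) * 2"
    unfolding n by (simp add: algebra_simps)
  show ?thesis
    unfolding split by simp
qed

context
  fixes q :: complex and P f :: "complex fls"
  assumes q: "q \<noteq> 0" and functional_equation: "fls_X * sigma_q q f + f = P"
begin

lemma fls_X_sigma_q_sub_Pm: "fls_X * sigma_q q (f - Pm q P j) = - (f - Pm q P (Suc j))"
  using functional_equation by (simp add: Pm_Suc algebra_simps)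

lemma fls_X_power_sigma_q_barycentric_term:
  assumes "k \<le> n" "j \<le> k"
  shows "fls_X ^ (n - k) * sigma_q q (barycentric_weight (Pm q P) {0..k} j * (f - Pm q P j) ^ n)
    = (-1) ^ (n - k) *
      (barycentric_weight (\<lambda>i. Pm q P (Suc i)) {0..k} j * (f - Pm q P (Suc j)) ^ n)"
proof -
  let ?A = "\<Prod>l\<in>{0..k} - {j}. Pm q P j - Pm q P l"
  let ?A' = "\<Prod>l\<in>{0..k} - {j}. Pm q P (Suc j) - Pm q P (Suc l)"
  have "fls_X ^ k * sigma_q q ?A = (\<Prod>l\<in>{0..k} - {j}. fls_X * sigma_q q (Pm q P j - Pm q P l))"
    using fls_X_power_sigma_q_prod[OF q, of "{0..k} - {j}"] assms(2) by simp
  then have A: "fls_X ^ k * sigma_q q ?A = (-1) ^ k * ?A'"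
    using assms(2) by (simp only: fls_X_sigma_q_Pm_diff prod_uminus) simp
  have G: "fls_X ^ n * sigma_q q ((f - Pm q P j) ^ n) = (-1) ^ n * (f - Pm q P (Suc j)) ^ n"
    unfolding fls_X_power_sigma_q_power[OF q] fls_X_sigma_q_sub_Pm by (rule power_minus)
  have "fls_X ^ (n - k) * sigma_q q (inverse ?A * (f - Pm q P j) ^ n)
      = fls_X ^ n * sigma_q q ((f - Pm q P j) ^ n) * inverse (fls_X ^ k * sigma_q q ?A)"
    using assms(1)
    by (simp add: sigma_q_mult[OF q] sigma_q_inverse[OF q] power_diff divide_inverse
        mult_ac)
  also have "\<dots> = (-1) ^ n * (-1) ^ k * (inverse ?A' * (f - Pm q P (Suc j)) ^ n)"
    unfolding A G inverse_mult_distrib by (simp add: power_inverse [symmetric] mult_ac)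
  finally show ?thesis
    using assms by (simp add: barycentric_weight_def minus_one_power_mult_diff)
qed

lemma fls_X_power_sigma_q_barycentric_sum:
  assumes "k \<le> n"
  shows "fls_X ^ (n - k) *
      sigma_q q (\<Sum>j\<in>{0..k}. barycentric_weight (Pm q P) {0..k} j * (f - Pm q P j) ^ n)
    = (-1) ^ (n - k) * (\<Sum>j\<in>{0..Suc k} - {0}.
        barycentric_weight (Pm q P) ({0..Suc k} - {0}) j * (f - Pm q P j) ^ n)"
proof -
  have shift: "{0..Suc k} - {0} = Suc ` {0..k}"
    by (simp add: atLeast0_atMost_Suc_eq_insert_0)
  have weight: "barycentric_weight (Pm q P) (Suc ` {0..k}) (Suc j)
      = barycentric_weight (\<lambda>i. Pm q P (Suc i)) {0..k} j" if "j \<in> {0..k}" for j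
    using barycentric_weight_image[OF inj_Suc that] by (simp add: comp_def)
  have "fls_X ^ (n - k) *
      sigma_q q (\<Sum>j\<in>{0..k}. barycentric_weight (Pm q P) {0..k} j * (f - Pm q P j) ^ n)
    = (\<Sum>j\<in>{0..k}. fls_X ^ (n - k) *
        sigma_q q (barycentric_weight (Pm q P) {0..k} j * (f - Pm q P j) ^ n))"
    by (simp only: sigma_q_sum sum_distrib_left)
  also have "\<dots> = (-1) ^ (n - k) * (\<Sum>j\<in>{0..k}.
      barycentric_weight (\<lambda>i. Pm q P (Suc i)) {0..k} j * (f - Pm q P (Suc j)) ^ n)"
    unfolding sum_distrib_left
    by (rule sum.cong) (use assms in \<open>simp_all add: fls_X_power_sigma_q_barycentric_term\<close>)
  also have "(\<Sum>j\<in>{0..k}.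
      barycentric_weight (\<lambda>i. Pm q P (Suc i)) {0..k} j * (f - Pm q P (Suc j)) ^ n)
    = (\<Sum>j\<in>Suc ` {0..k}. barycentric_weight (Pm q P) (Suc ` {0..k}) j * (f - Pm q P j) ^ n)"
    by (simp only: sum.reindex[OF inj_Suc] comp_def weight cong: sum.cong)
  finally show ?thesis
    unfolding shift .
qed

lemma Lop_power_eq_barycentric_sum:
  assumes "P \<noteq> 0" "k \<le> n"
  shows "Lop q P n k (f ^ n) = (-1) ^ (k * (2 * n - k + 1) div 2) *
    (\<Sum>j\<in>{0..k}. barycentric_weight (Pm q P) {0..k} j * (f - Pm q P j) ^ n)"
  using assms(2)
proof (induction k)
  case 0
  then show ?case by (simp add: barycentric_weight_def)
next
  case (Suc k)
  define S where "S m = (\<Sum>j\<in>{0..m}. barycentric_weight (Pm q P) {0..m} j * (f - Pm q P j) ^ n)"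
    for m
  define S' where "S' = (\<Sum>j\<in>{0..Suc k} - {0}.
    barycentric_weight (Pm q P) ({0..Suc k} - {0}) j * (f - Pm q P j) ^ n)"
  define \<epsilon> :: "complex fls" where "\<epsilon> = (-1) ^ (k * (2 * n - k + 1) div 2)"
  have kn: "k < n"
    using Suc.prems by simp
  have IH: "Lop q P n k (f ^ n) = \<epsilon> * S k"
    using Suc by (simp add: \<epsilon>_def S_def)
  have "{0..k} = {0..Suc k} - {Suc k}"
    by auto
  then have S'_diff: "S' - S k = (Pm q P (Suc k) - Pm q P 0) * S (Suc k)"
    unfolding S_def S'_def using inj_on_subset[OF inj_Pm[OF q assms(1)]]
    by (simp only:) (rule sum_barycentric_weight_diff; simp)
  have "fls_X ^ (n - k) * sigma_q q (\<epsilon> * S k) = \<epsilon> * (fls_X ^ (n - k) * sigma_q q (S k))"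
    by (simp add: \<epsilon>_def sigma_q_mult[OF q] sigma_q_power[OF q] mult_ac)
  also have "\<dots> = \<epsilon> * ((-1) ^ (n - k) * S')"
    using fls_X_power_sigma_q_barycentric_sum kn by (simp add: S_def S'_def)
  finally have "Lop q P n (Suc k) (f ^ n)
      = \<epsilon> * (-1) ^ (n - k) * (inverse (Pm q P (Suc k)) * (S' - S k))"
    by (simp add: IH algebra_simps)
  also have "inverse (Pm q P (Suc k)) * (S' - S k) = S (Suc k)"
    using S'_diff Pm_Suc_neq_0[OF assms(1)] by simp
  also have "\<epsilon> * (-1) ^ (n - k) = (-1) ^ (Suc k * (2 * n - Suc k + 1) div 2)"
    unfolding \<epsilon>_def triangle_exponent_Suc[OF kn] by (rule power_add [symmetric])
  finally show ?case
    by (simp add: S_def)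
qed

end

theorem lemma1:
  fixes q :: complex and P f :: "complex fls" and n k :: nat
  assumes "q \<noteq> 0" and "P \<noteq> 0"
    and "fls_X * sigma_q q f + f = P"
    and "1 \<le> k" and "k \<le> n"
  shows "Lop q P n k (f ^ n) =
    (-1) ^ (k * (2 * n - k + 1) div 2) *
      (\<Sum>j\<in>{0..k}. inverse (Akj q P k j) * (f - Pm q P j) ^ n)"
  using Lop_power_eq_barycentric_sum[OF assms(1,3,2,5)]
  by (simp add: barycentric_weight_def Akj_def)

end
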